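(* For $p\in\mathbb{C}$, let $\Delta_p$ be the map on the oscillator algebra (generated by $H,E,F$ with $[H,E]=2E$, $[H,F]=-2F$, $[E,F]=1$) defined by $\Delta_p(H)=H\otimes \mathbb{I}+\mathbb{I}\otimes H$, $\Delta_p(E)=E\otimes \mathbb{I}+\mathbb{I}\otimes E$, $\Delta_p(F)=pF\otimes \mathbb{I}+(1-p)\mathbb{I}\otimes F$. In general $(\Delta_q\otimes \mathrm{Id})\circ\Delta_p \neq (\mathrm{Id}\otimes \Delta_{q'})\circ\Delta_{p'}$, but if the parameters satisfy $p'=pq$ and $1-p=(1-p')(1-q')$, then $(\Delta_q\otimes \mathrm{Id})\circ\Delta_p = (\mathrm{Id}\otimes \Delta_{q'})\circ\Delta_{p'}$.
   Context: The oscillator algebra is generated by $H,E,F$ with relations $[H,E]=2E$, $[H,F]=-2F$, $[E,F]=1$, acting on lowest-weight modules $V_\lambda$ with basis $|\lambda,n\rangle$ by $H|\lambda,n\rangle=(\lambda+2n)|\lambda,n\rangle$, $E|\lambda,n\rangle=|\lambda,n+1\rangle$, $F|\lambda,n\rangle=-n|\lambda,n-1\rangle$. The map $\Delta_p$ above arises as the coproduct for which the Clebsch--Gordan coefficients of $V_{\lambda_1}\otimes V_{\lambda_2}\sim\bigoplus_{k\ge0}V_{\lambda_1+\lambda_2+2k}$ are proportional to Krawtchouk polynomials $\binom{N}{n}\,{}_2F_1(-n,-k;-N;p^{-1})$. Here $\mathbb{I}$ is the identity and $\mathrm{Id}$ the identity map. *)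

theory Defs
  imports Complex_Main
begin

text \<open>Terms of the free (term) algebra over generators of type 'g, with complex scalars.
  Sc c stands for c times the unit.\<close>
datatype 'g alg = Gen 'g | Sc complex | Add "'g alg" "'g alg" | Mul "'g alg" "'g alg"

text \<open>Equality in the unital associative complex algebra presented by generators 'g and
  relations R: the least congruence containing R and the axioms of a unital associative
  C-algebra (scalar multiplication c*a is Mul (Sc c) a).\<close>
inductive alg_eq :: "('g alg \<times> 'g alg) set \<Rightarrow> 'g alg \<Rightarrow> 'g alg \<Rightarrow> bool" for R where
  rel: "(a, b) \<in> R \<Longrightarrow> alg_eq R a b"
| refl: "alg_eq R a a"
| sym: "alg_eq R a b \<Longrightarrow> alg_eq R b a"
| trans: "alg_eq R a b \<Longrightarrow> alg_eq R b c \<Longrightarrow> alg_eq R a c"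
| add_cong: "alg_eq R a a' \<Longrightarrow> alg_eq R b b' \<Longrightarrow> alg_eq R (Add a b) (Add a' b')"
| mul_cong: "alg_eq R a a' \<Longrightarrow> alg_eq R b b' \<Longrightarrow> alg_eq R (Mul a b) (Mul a' b')"
| add_assoc: "alg_eq R (Add (Add a b) c) (Add a (Add b c))"
| add_comm: "alg_eq R (Add a b) (Add b a)"
| add_zero: "alg_eq R (Add a (Sc 0)) a"
| add_neg: "alg_eq R (Add a (Mul (Sc (-1)) a)) (Sc 0)"
| mul_assoc: "alg_eq R (Mul (Mul a b) c) (Mul a (Mul b c))"
| mul_one_left: "alg_eq R (Mul (Sc 1) a) a"
| mul_one_right: "alg_eq R (Mul a (Sc 1)) a"
| distrib_left: "alg_eq R (Mul a (Add b c)) (Add (Mul a b) (Mul a c))"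
| distrib_right: "alg_eq R (Mul (Add a b) c) (Add (Mul a c) (Mul b c))"
| sc_add: "alg_eq R (Sc (x + y)) (Add (Sc x) (Sc y))"
| sc_mult: "alg_eq R (Sc (x * y)) (Mul (Sc x) (Sc y))"
| sc_central: "alg_eq R (Mul (Sc x) a) (Mul a (Sc x))"

definition comm :: "'g alg \<Rightarrow> 'g alg \<Rightarrow> 'g alg" where
  "comm a b = Add (Mul a b) (Mul (Sc (-1)) (Mul b a))"

primrec subst :: "('a \<Rightarrow> 'b alg) \<Rightarrow> 'a alg \<Rightarrow> 'b alg" where
  "subst f (Gen g) = f g"
| "subst f (Sc c) = Sc c"
| "subst f (Add a b) = Add (subst f a) (subst f b)"
| "subst f (Mul a b) = Mul (subst f a) (subst f b)"

datatype gen = H | E | F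

text \<open>n-fold tensor power of the oscillator algebra: generator (i, X) is
  I \<otimes> ... \<otimes> X (in slot i) \<otimes> ... \<otimes> I, for i < n.\<close>
definition tensor_rels :: "nat \<Rightarrow> ((nat \<times> gen) alg \<times> (nat \<times> gen) alg) set" where
  "tensor_rels n =
     {(comm (Gen (i, H)) (Gen (i, E)), Mul (Sc 2) (Gen (i, E))) | i. i < n}
   \<union> {(comm (Gen (i, H)) (Gen (i, F)), Mul (Sc (-2)) (Gen (i, F))) | i. i < n}
   \<union> {(comm (Gen (i, E)) (Gen (i, F)), Sc 1) | i. i < n}
   \<union> {(comm (Gen (i, X)) (Gen (j, Y)), Sc 0) | i j X Y. i < n \<and> j < n \<and> i \<noteq> j}"

fun Delta :: "complex \<Rightarrow> gen \<Rightarrow> (nat \<times> gen) alg" where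
  "Delta p H = Add (Gen (0, H)) (Gen (1, H))"
| "Delta p E = Add (Gen (0, E)) (Gen (1, E))"
| "Delta p F = Add (Mul (Sc p) (Gen (0, F))) (Mul (Sc (1 - p)) (Gen (1, F)))"

definition shift :: "nat \<times> gen \<Rightarrow> (nat \<times> gen) alg" where
  "shift ix = Gen (fst ix + 1, snd ix)"

text \<open>Delta_q \<otimes> Id : U\<otimes>U \<rightarrow> U\<otimes>U\<otimes>U on generators.\<close>
definition Delta_Id :: "complex \<Rightarrow> nat \<times> gen \<Rightarrow> (nat \<times> gen) alg" where
  "Delta_Id q ix = (if fst ix = 0 then Delta q (snd ix) else Gen (fst ix + 1, snd ix))"

text \<open>Id \<otimes> Delta_q : U\<otimes>U \<rightarrow> U\<otimes>U\<otimes>U on generators.\<close>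
definition Id_Delta :: "complex \<Rightarrow> nat \<times> gen \<Rightarrow> (nat \<times> gen) alg" where
  "Id_Delta q ix = (if fst ix = 0 then Gen ix
                    else if fst ix = 1 then subst shift (Delta q (snd ix))
                    else Gen (fst ix + 1, snd ix))"

text \<open>The two composites U \<rightarrow> U\<otimes>U\<otimes>U, applied to a (representative) element w of U.\<close>
definition lhs_map :: "complex \<Rightarrow> complex \<Rightarrow> gen alg \<Rightarrow> (nat \<times> gen) alg" where
  "lhs_map p q w = subst (Delta_Id q) (subst (Delta p) w)"

definition rhs_map :: "complex \<Rightarrow> complex \<Rightarrow> gen alg \<Rightarrow> (nat \<times> gen) alg" where
  "rhs_map p' q' w = subst (Id_Delta q') (subst (Delta p') w)"

end

theory Submission
  imports Defs
begin

text \<open>Both composites are algebra maps, so it suffices to compare them on generators. They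
  send H and E to the sum of the three slot copies, and F to c0 F0 + c1 F1 + c2 F2 with
  coefficient triples (pq, p(1-q), 1-p) and (p', (1-p')q', (1-p')(1-q')) respectively. Under
  p' = pq and 1-p = (1-p')(1-q') the middle coefficients agree as well, since all three sum
  to 1. Conversely the triples must agree, because in the representation of the tensor cube
  on V(0) \<otimes> V(0) \<otimes> V(0) the operators F0, F1, F2 are linearly independent.\<close>

lemma alg_eq_cong_iff:
  assumes "alg_eq R a a'" and "alg_eq R b b'"
  shows "alg_eq R a b \<longleftrightarrow> alg_eq R a' b'"
  by (meson assms alg_eq.sym alg_eq.trans)

lemma alg_eq_Sc_distrib:
  "alg_eq R (Mul (Sc a) (Add (Mul (Sc b) x) (Mul (Sc c) y)))
     (Add (Mul (Sc (a * b)) x) (Mul (Sc (a * c)) y))"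
proof -
  have "alg_eq R (Mul (Sc a) (Mul (Sc b) z)) (Mul (Sc (a * b)) z)" for b z
    by (meson alg_eq.mul_assoc alg_eq.sym alg_eq.trans alg_eq.mul_cong alg_eq.refl alg_eq.sc_mult)
  then show ?thesis
    by (meson alg_eq.distrib_left alg_eq.trans alg_eq.add_cong)
qed

lemma subst_subst: "subst f (subst g w) = subst (\<lambda>x. subst f (g x)) w"
  by (induction w) simp_all

lemma subst_alg_eq:
  assumes "\<And>x. alg_eq R (f x) (f' x)"
  shows "alg_eq R (subst f w) (subst f' w)"
  by (induction w) (simp_all add: assms alg_eq.refl alg_eq.add_cong alg_eq.mul_cong)

primrec interp ::
  "('g \<Rightarrow> ('i \<Rightarrow> complex) \<Rightarrow> 'i \<Rightarrow> complex) \<Rightarrow> 'g alg \<Rightarrow> ('i \<Rightarrow> complex) \<Rightarrow> 'i \<Rightarrow> complex"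
where
  "interp \<rho> (Gen g) = \<rho> g"
| "interp \<rho> (Sc c) = (\<lambda>f x. c * f x)"
| "interp \<rho> (Add a b) = (\<lambda>f x. interp \<rho> a f x + interp \<rho> b f x)"
| "interp \<rho> (Mul a b) = (\<lambda>f. interp \<rho> a (interp \<rho> b f))"

definition linear_action :: "('g \<Rightarrow> ('i \<Rightarrow> complex) \<Rightarrow> 'i \<Rightarrow> complex) \<Rightarrow> bool" where
  "linear_action \<rho> \<longleftrightarrow>
     (\<forall>g f h. \<rho> g (\<lambda>x. f x + h x) = (\<lambda>x. \<rho> g f x + \<rho> g h x)) \<and>
     (\<forall>g c f. \<rho> g (\<lambda>x. c * f x) = (\<lambda>x. c * \<rho> g f x))"

lemma interp_add:
  assumes "linear_action \<rho>"
  shows "interp \<rho> a (\<lambda>x. f x + h x) = (\<lambda>x. interp \<rho> a f x + interp \<rho> a h x)"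
  using assms by (induction a arbitrary: f h) (auto simp: linear_action_def algebra_simps)

lemma interp_scale:
  assumes "linear_action \<rho>"
  shows "interp \<rho> a (\<lambda>x. c * f x) = (\<lambda>x. c * interp \<rho> a f x)"
  using assms by (induction a arbitrary: f) (auto simp: linear_action_def algebra_simps)

lemma interp_alg_eq:
  assumes "alg_eq R a b" and "linear_action \<rho>"
    and "\<And>a b. (a, b) \<in> R \<Longrightarrow> interp \<rho> a = interp \<rho> b"
  shows "interp \<rho> a = interp \<rho> b"
  using assms(1)
proof (induction rule: alg_eq.induct)
  case (rel a b)
  then show ?case by (rule assms(3))
next
  case (distrib_left a b c)
  then show ?case by (simp add: interp_add[OF assms(2)])
next
  case (sc_central x a)
  then show ?case by (simp add: interp_scale[OF assms(2)])
next
  case (mul_cong a a' b b')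
  then show ?case by simp
qed (auto simp: fun_eq_iff algebra_simps)

text \<open>The tensor powers of V(0): a function f on occupation numbers m stands for the formal
  vector \<Sum> f m |m\<rangle> over all m, and generator (i, X) acts on slot i.\<close>

fun fock :: "nat \<times> gen \<Rightarrow> ((nat \<Rightarrow> nat) \<Rightarrow> complex) \<Rightarrow> (nat \<Rightarrow> nat) \<Rightarrow> complex" where
  "fock (i, H) f m = 2 * of_nat (m i) * f m"
| "fock (i, E) f m = (if m i = 0 then 0 else f (m(i := m i - 1)))"
| "fock (i, F) f m = - of_nat (Suc (m i)) * f (m(i := Suc (m i)))"

lemma linear_action_fock: "linear_action fock"
proof -
  have "fock g (\<lambda>x. f x + h x) = (\<lambda>x. fock g f x + fock g h x)"
    and "fock g (\<lambda>x. c * f x) = (\<lambda>x. c * fock g f x)" for g f h c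
    by (cases g; cases "snd g"; auto simp: algebra_simps)+
  then show ?thesis
    unfolding linear_action_def by blast
qed

lemma fock_commute:
  assumes "i \<noteq> j"
  shows "fock (i, X) (fock (j, Y) f) = fock (j, Y) (fock (i, X) f)"
  using assms by (cases X; cases Y; simp add: fun_eq_iff fun_upd_twist algebra_simps)

lemma fock_tensor_rels:
  assumes "(a, b) \<in> tensor_rels n"
  shows "interp fock a = interp fock b"
proof -
  have "interp fock (comm (Gen (i, H)) (Gen (i, E))) = interp fock (Mul (Sc 2) (Gen (i, E)))"
    and "interp fock (comm (Gen (i, H)) (Gen (i, F))) = interp fock (Mul (Sc (-2)) (Gen (i, F)))"
    and "interp fock (comm (Gen (i, E)) (Gen (i, F))) = interp fock (Sc 1)" for i
    by (auto simp: comm_def fun_eq_iff algebra_simps)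
  moreover have "interp fock (comm (Gen (i, X)) (Gen (j, Y))) = interp fock (Sc 0)"
    if "i \<noteq> j" for i j X Y
    using fock_commute[OF that] by (simp add: comm_def fun_eq_iff)
  ultimately show ?thesis
    using assms unfolding tensor_rels_def by auto
qed

definition F_comb :: "complex \<Rightarrow> complex \<Rightarrow> complex \<Rightarrow> (nat \<times> gen) alg" where
  "F_comb c0 c1 c2 =
     Add (Mul (Sc c0) (Gen (0, F))) (Add (Mul (Sc c1) (Gen (1, F))) (Mul (Sc c2) (Gen (2, F))))"

lemma interp_fock_F_comb_vacuum:
  "interp fock (F_comb c0 c1 c2) v (\<lambda>_. 0) =
     - (c0 * v ((\<lambda>_. 0)(0 := 1)) + c1 * v ((\<lambda>_. 0)(1 := 1)) + c2 * v ((\<lambda>_. 0)(2 := 1)))"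
  by (simp add: F_comb_def algebra_simps)

lemma single_occupation_eq_iff: "((\<lambda>_. 0)(i := 1) = ((\<lambda>_. 0)(j := 1) :: nat \<Rightarrow> nat)) \<longleftrightarrow> i = j"
  by (auto simp: fun_eq_iff)

lemma F_comb_alg_eq_iff:
  "alg_eq (tensor_rels n) (F_comb a0 a1 a2) (F_comb b0 b1 b2) \<longleftrightarrow> a0 = b0 \<and> a1 = b1 \<and> a2 = b2"
proof
  assume "alg_eq (tensor_rels n) (F_comb a0 a1 a2) (F_comb b0 b1 b2)"
  then have "interp fock (F_comb a0 a1 a2) = interp fock (F_comb b0 b1 b2)"
    by (rule interp_alg_eq[OF _ linear_action_fock fock_tensor_rels])
  then have "interp fock (F_comb a0 a1 a2) (\<lambda>m. if m = (\<lambda>_. 0)(j := 1) then 1 else 0) (\<lambda>_. 0) =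
             interp fock (F_comb b0 b1 b2) (\<lambda>m. if m = (\<lambda>_. 0)(j := 1) then 1 else 0) (\<lambda>_. 0)"
    for j by simp
  from this[of 0] this[of 1] this[of 2] show "a0 = b0 \<and> a1 = b1 \<and> a2 = b2"
    unfolding interp_fock_F_comb_vacuum single_occupation_eq_iff by simp
qed (auto intro: alg_eq.refl)

lemma lhs_map_rhs_map_alg_eq:
  assumes "\<And>X. alg_eq R (lhs_map p q (Gen X)) (rhs_map p' q' (Gen X))"
  shows "alg_eq R (lhs_map p q w) (rhs_map p' q' w)"
proof -
  have "lhs_map p q w = subst (\<lambda>X. lhs_map p q (Gen X)) w"
    and "rhs_map p' q' w = subst (\<lambda>X. rhs_map p' q' (Gen X)) w"
    by (simp_all add: lhs_map_def rhs_map_def subst_subst)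
  then show ?thesis
    using subst_alg_eq[OF assms] by simp
qed

lemma lhs_map_rhs_map_primitive:
  assumes "X \<noteq> F"
  shows "alg_eq R (lhs_map p q (Gen X)) (rhs_map p' q' (Gen X))"
  using assms by (cases X)
    (simp_all add: lhs_map_def rhs_map_def Delta_Id_def Id_Delta_def shift_def alg_eq.add_assoc)

lemma lhs_map_F: "alg_eq R (lhs_map p q (Gen F)) (F_comb (p * q) (p * (1 - q)) (1 - p))"
  unfolding lhs_map_def F_comb_def
  by (simp add: Delta_Id_def numeral_2_eq_2)
    (rule alg_eq.trans[OF alg_eq.add_cong[OF alg_eq_Sc_distrib alg_eq.refl] alg_eq.add_assoc])

lemma rhs_map_F:
  "alg_eq R (rhs_map p' q' (Gen F)) (F_comb p' ((1 - p') * q') ((1 - p') * (1 - q')))"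
  unfolding rhs_map_def F_comb_def
  by (simp add: Id_Delta_def shift_def numeral_2_eq_2)
    (rule alg_eq.add_cong[OF alg_eq.refl alg_eq_Sc_distrib])

lemma lhs_map_rhs_map_F_iff:
  "alg_eq (tensor_rels n) (lhs_map p q (Gen F)) (rhs_map p' q' (Gen F)) \<longleftrightarrow>
     p * q = p' \<and> p * (1 - q) = (1 - p') * q' \<and> 1 - p = (1 - p') * (1 - q')"
  by (simp only: alg_eq_cong_iff[OF lhs_map_F rhs_map_F] F_comb_alg_eq_iff)

theorem mainTheorem5:
  shows "(\<exists>p q p' q' :: complex. \<exists>w.
            \<not> alg_eq (tensor_rels 3) (lhs_map p q w) (rhs_map p' q' w))
       \<and> (\<forall>p q p' q' :: complex. p' = p * q \<and> 1 - p = (1 - p') * (1 - q') \<longrightarrow>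
            (\<forall>w. alg_eq (tensor_rels 3) (lhs_map p q w) (rhs_map p' q' w)))"
proof (intro conjI allI impI)
  have "\<not> alg_eq (tensor_rels 3) (lhs_map 1 0 (Gen F)) (rhs_map 0 0 (Gen F))"
    unfolding lhs_map_rhs_map_F_iff by simp
  then show "\<exists>p q p' q' :: complex. \<exists>w. \<not> alg_eq (tensor_rels 3) (lhs_map p q w) (rhs_map p' q' w)"
    by blast
next
  fix p q p' q' :: complex and w
  assume params: "p' = p * q \<and> 1 - p = (1 - p') * (1 - q')"
  then have "p * (1 - q) = (1 - p') * q'"
    by algebra
  then have "alg_eq (tensor_rels 3) (lhs_map p q (Gen X)) (rhs_map p' q' (Gen X))" for X
    using params lhs_map_rhs_map_primitive lhs_map_rhs_map_F_iff by (cases X) auto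
  then show "alg_eq (tensor_rels 3) (lhs_map p q w) (rhs_map p' q' w)"
    by (rule lhs_map_rhs_map_alg_eq)
qed

end
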